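(* Consider the following model. Constants $\alpha,\beta\in[0,1]$ satisfy $0<\alpha+\beta\le 1$ and $\alpha\ge\beta$; let $\eta=\frac{\alpha}{1-\beta}$. An agent has innate opinion $x_0\in[-1,1]$, and at every time $k=0,1,2,\dots$ the platform recommends the same content $u_k=u_0\in[-1,1]$. The agent chooses $\mathrm{clk}_k\in\{0,1\}$, and its opinion evolves by $$x_{k}=\begin{cases}\alpha x_0+\beta x_{k-1}+(1-\alpha-\beta)u_{k-1}, & \mathrm{clk}_{k-1}=1,\\ \frac{\alpha}{\alpha+\beta}x_0+\frac{\beta}{\alpha+\beta}x_{k-1}, & \mathrm{clk}_{k-1}=0.\end{cases}$$ Time is divided into consecutive blocks of length $s\in\mathbb{N}$, $s\ge1$, block $i\ge0$ consisting of times $is,\dots,is+s-1$; in block $i$ the agent clicks at times $is,\dots,is+T_i-1$ and does not click at the remaining times of the block. Let $T_0=s$, and let $x_i^{(p)}:=x_{is}$ be the opinion at the beginning of block $i$ under policy $p$, where: - policy 1 (fixed): $T_i=T_0$ for all $i$; - policy 2 (decreasing): given $\kappa>1$, $T_{i+1}=\lfloor T_i/\kappa\rfloor$; - policy 3 (adaptive decreasing): given an integer $\tau\ge1$ and $x_{\text{drift}}>0$, $T_{i+1}=\max\{0,T_i-\tau\}$ if $|x_{(i+1)s}-x_0|\ge x_{\text{drift}}$, and $T_{i+1}=T_i$ otherwise. Then: (a) $\lim_{i\to\infty}x_i^{(1)}=\eta x_0+(1-\eta)u_0$; (b) $\lim_{i\to\infty}x_i^{(2)}=x_0$; (c) if $x_0<u_0$,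 then $x_0\le\lim_{i\to\infty}x_i^{(3)}\le\min\{1,x_0+x_{\text{drift}}\}$; otherwise $\max\{-1,x_0-x_{\text{drift}}\}\le\lim_{i\to\infty}x_i^{(3)}\le x_0$.
   Context: The model describes an agent interacting with a recommendation platform that always recommends the same content $u_0$; $\mathrm{clk}_k=1$ means the agent consumes the recommended content at time $k$. *)

theory Defs
  imports Complex_Main
begin

definition opinion_step :: "real \<Rightarrow> real \<Rightarrow> real \<Rightarrow> real \<Rightarrow> bool \<Rightarrow> real \<Rightarrow> real" where
  "opinion_step \<alpha> \<beta> x0 u0 clk y =
     (if clk then \<alpha> * x0 + \<beta> * y + (1 - \<alpha> - \<beta>) * u0
      else \<alpha> / (\<alpha> + \<beta>) * x0 + \<beta> / (\<alpha> + \<beta>) * y)"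

definition block_click :: "nat \<Rightarrow> (nat \<Rightarrow> nat) \<Rightarrow> nat \<Rightarrow> bool" where
  "block_click s T k \<longleftrightarrow> k mod s < T (k div s)"

definition trajectory :: "real \<Rightarrow> real \<Rightarrow> real \<Rightarrow> real \<Rightarrow> nat \<Rightarrow> (nat \<Rightarrow> nat) \<Rightarrow> (nat \<Rightarrow> real) \<Rightarrow> bool" where
  "trajectory \<alpha> \<beta> x0 u0 s T x \<longleftrightarrow>
     x 0 = x0 \<and> (\<forall>k. x (Suc k) = opinion_step \<alpha> \<beta> x0 u0 (block_click s T k) (x k))"

end

theory Submission
  imports Defs
begin

text \<open>Both branches of the step map are convex combinations of the innate opinion, the current
  opinion and the content, with weight at most 1/2 on the current opinion (this is where
  \<open>\<beta> \<le> \<alpha>\<close> enters); so trajectories stay between \<open>x0\<close> and \<open>u0\<close>, and each step is a contraction.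
  Under the fixed policy the agent always clicks and the opinion converges to the fixed point
  \<open>\<eta> x0 + (1 - \<eta>) u0\<close> of the clicking map. The decreasing policy stops clicking after at most
  \<open>s\<close> blocks, and the non-clicking map then pulls the opinion back to \<open>x0\<close>.
  The adaptive click budget is a nonincreasing natural number, hence eventually constant; from
  then on every block applies the same contraction, so the block opinions converge. Either the
  final budget is zero and the limit is \<open>x0\<close>, or it is positive, so the drift test fails in every
  later block and the limit lies within \<open>x_drift\<close> of \<open>x0\<close>.\<close>

lemma LIMSEQ_affine_recurrence:
  fixes x :: "nat \<Rightarrow> real"
  assumes "\<bar>r\<bar> < 1" and "\<And>k. k \<ge> M \<Longrightarrow> x (Suc k) = r * x k + (1 - r) * c"
  shows "x \<longlonglongrightarrow> c"
proof -
  have "x (j + M) - c = r ^ j * (x M - c)" for j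
  proof (induction j)
    case (Suc j)
    have "x (Suc j + M) - c = r * (x (j + M) - c)"
      using assms(2) [of "j + M"] by (simp add: algebra_simps)
    with Suc.IH show ?case
      by simp
  qed simp
  moreover have "(\<lambda>j. r ^ j * (x M - c)) \<longlonglongrightarrow> 0"
    using assms(1) by (intro tendsto_mult_left_zero LIMSEQ_power_zero) simp
  ultimately have "(\<lambda>j. x (j + M) - c) \<longlonglongrightarrow> 0"
    by simp
  then have "(\<lambda>j. x (j + M)) \<longlonglongrightarrow> c"
    by (rule LIM_zero_cancel)
  then show ?thesis
    by (rule LIMSEQ_offset)
qed

lemma LIMSEQ_mult_stride:
  assumes "x \<longlonglongrightarrow> L" and "0 < s"
  shows "(\<lambda>i. x (i * s)) \<longlonglongrightarrow> L"
proof -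
  have "strict_mono (\<lambda>i. i * s)"
    using assms(2) by (intro strict_monoI) simp
  from LIMSEQ_subseq_LIMSEQ [OF assms(1) this] show ?thesis
    by (simp add: o_def)
qed

text \<open>Once the maps are \<open>s\<close>-periodic, \<open>x (k + s)\<close> and \<open>x k\<close> are pushed through the same
  map at every step, so the block differences \<open>x (k + s) - x k\<close> shrink geometrically.\<close>

lemma convergent_stride_if_eventually_periodic_contraction:
  fixes x :: "nat \<Rightarrow> real" and f :: "nat \<Rightarrow> real \<Rightarrow> real"
  assumes "0 \<le> q" "q < 1" "0 < s"
    and lipschitz: "\<And>k y y'. \<bar>f k y - f k y'\<bar> \<le> q * \<bar>y - y'\<bar>"
    and periodic: "\<And>k. k \<ge> M \<Longrightarrow> f (k + s) = f k"
    and recurrence: "\<And>k. x (Suc k) = f k (x k)"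
  shows "convergent (\<lambda>i. x (i * s))"
proof -
  define d where "d k = x (k + s) - x k" for k
  have d_Suc: "\<bar>d (Suc k)\<bar> \<le> q * \<bar>d k\<bar>" if "k \<ge> M" for k
  proof -
    have "d (Suc k) = f k (x (k + s)) - f k (x k)"
      using periodic [OF that] recurrence [of k] recurrence [of "k + s"] by (simp add: d_def)
    then show ?thesis
      using lipschitz [of k] by (simp add: d_def)
  qed
  have d_add: "\<bar>d (k + j)\<bar> \<le> q ^ j * \<bar>d k\<bar>" if "k \<ge> M" for k j
  proof (induction j)
    case (Suc j)
    have "\<bar>d (k + Suc j)\<bar> \<le> q * \<bar>d (k + j)\<bar>"
      using d_Suc [of "k + j"] that by simp
    also have "\<dots> \<le> q * (q ^ j * \<bar>d k\<bar>)"
      using Suc.IH \<open>0 \<le> q\<close> by (rule mult_left_mono)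
    finally show ?case by simp
  qed simp
  have ratio: "norm (d (Suc i * s)) \<le> q * norm (d (i * s))" if "i \<ge> M" for i
  proof -
    have "i \<le> i * s"
      using \<open>0 < s\<close> by simp
    with that have "M \<le> i * s"
      by linarith
    then have "\<bar>d (i * s + s)\<bar> \<le> q ^ s * \<bar>d (i * s)\<bar>"
      by (rule d_add)
    also have "\<dots> \<le> q * \<bar>d (i * s)\<bar>"
      using power_decreasing [of 1 s q] assms(1-3) by (intro mult_right_mono) auto
    finally show ?thesis by (simp add: add.commute)
  qed
  have "summable (\<lambda>i. d (i * s))"
    using \<open>q < 1\<close> ratio by (rule summable_ratio_test)
  moreover have "(\<Sum>i<n. d (i * s)) = x (n * s) - x 0" for n
    using sum_lessThan_telescope [of "\<lambda>i. x (i * s)" n] by (simp add: d_def add.commute)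
  ultimately show ?thesis
    by (simp add: summable_iff_convergent convergent_diff_const_right_iff)
qed

lemma trajectory_Suc:
  "trajectory \<alpha> \<beta> x0 u0 s T x \<Longrightarrow> x (Suc k) = opinion_step \<alpha> \<beta> x0 u0 (block_click s T k) (x k)"
  unfolding trajectory_def by blast

lemma block_click_periodic:
  assumes "0 < s" and "\<forall>i\<ge>N. T i = c" and "k \<ge> N * s"
  shows "block_click s T (k + s) = block_click s T k"
proof -
  have "(k + s) div s = Suc (k div s)" "(k + s) mod s = k mod s"
    using assms(1) by simp_all
  moreover have "N \<le> k div s"
    using assms(1,3) by (simp add: less_eq_div_iff_mult_less_eq)
  ultimately show ?thesis
    using assms(2) by (simp add: block_click_def)
qed

lemma no_block_click_if_eventually_zero:
  assumes "0 < s" and "\<forall>i\<ge>N. T i = 0" and "k \<ge> N * s"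
  shows "\<not> block_click s T k"
  using assms by (simp add: block_click_def less_eq_div_iff_mult_less_eq)

lemma nat_floor_divide_le_pred:
  assumes "\<kappa> > 1"
  shows "nat \<lfloor>real n / \<kappa>\<rfloor> \<le> n - 1"
proof (cases "n = 0")
  case False
  then have "real n / \<kappa> < real n"
    using assms by (simp add: divide_less_eq)
  then show ?thesis
    using False by linarith
qed simp

lemma nat_seq_le_diff_if_decreasing:
  fixes T :: "nat \<Rightarrow> nat"
  assumes "\<And>i. T (Suc i) \<le> T i - 1"
  shows "T i \<le> T 0 - i"
proof (induction i)
  case (Suc i)
  then show ?case
    using assms [of i] by linarith
qed simp

lemma nat_seq_eventually_const_if_antimono:
  fixes T :: "nat \<Rightarrow> nat"
  assumes "\<And>i. T (Suc i) \<le> T i"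
  obtains N where "\<forall>i\<ge>N. T i = T N"
proof -
  obtain N where N: "\<forall>j. T N \<le> T j"
    using ex_has_least_nat [of "\<lambda>_. True" 0 T] by blast
  have "T i \<le> T N" if "N \<le> i" for i
    using that assms by (induction i rule: dec_induct) (auto intro: order_trans)
  with N show thesis
    by (meson le_antisym that)
qed

locale opinion_dynamics =
  fixes \<alpha> \<beta> x0 u0 :: real
  assumes beta_nonneg: "0 \<le> \<beta>" and beta_le_alpha: "\<beta> \<le> \<alpha>"
    and sum_pos: "0 < \<alpha> + \<beta>" and sum_le_one: "\<alpha> + \<beta> \<le> 1"
begin

definition click_limit :: real where
  "click_limit = \<alpha> / (1 - \<beta>) * x0 + (1 - \<alpha> / (1 - \<beta>)) * u0"

lemma beta_le_half: "\<beta> \<le> 1 / 2"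
  using beta_le_alpha sum_le_one by linarith

lemma click_weight: "0 \<le> \<alpha> / (1 - \<beta>)" "\<alpha> / (1 - \<beta>) \<le> 1"
  using beta_nonneg beta_le_alpha sum_le_one beta_le_half by (simp_all add: divide_simps)

lemma no_click_weight: "0 \<le> \<beta> / (\<alpha> + \<beta>)" "\<beta> / (\<alpha> + \<beta>) \<le> 1 / 2"
  using beta_nonneg beta_le_alpha sum_pos by (simp_all add: divide_simps)

lemma opinion_step_click:
  "opinion_step \<alpha> \<beta> x0 u0 True y = \<beta> * y + (1 - \<beta>) * click_limit"
proof -
  have cancel: "(1 - \<beta>) * (\<alpha> / (1 - \<beta>)) = \<alpha>"
    using beta_le_half by simp
  have "(1 - \<beta>) * click_limit = (1 - \<beta>) * (\<alpha> / (1 - \<beta>)) * x0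
      + ((1 - \<beta>) - (1 - \<beta>) * (\<alpha> / (1 - \<beta>))) * u0"
    by (simp add: click_limit_def algebra_simps)
  then show ?thesis
    unfolding cancel by (simp add: opinion_step_def algebra_simps)
qed

lemma opinion_step_no_click:
  "opinion_step \<alpha> \<beta> x0 u0 False y = \<beta> / (\<alpha> + \<beta>) * y + (1 - \<beta> / (\<alpha> + \<beta>)) * x0"
  using sum_pos by (simp add: opinion_step_def field_simps)

lemma opinion_step_contraction:
  "\<bar>opinion_step \<alpha> \<beta> x0 u0 c y - opinion_step \<alpha> \<beta> x0 u0 c y'\<bar> \<le> 1 / 2 * \<bar>y - y'\<bar>"
proof -
  have affine: "\<bar>(r * y + w) - (r * y' + w)\<bar> \<le> 1 / 2 * \<bar>y - y'\<bar>"
    if "0 \<le> r" "r \<le> 1 / 2" for r w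
  proof -
    have "\<bar>(r * y + w) - (r * y' + w)\<bar> = r * \<bar>y - y'\<bar>"
      using that by (simp add: abs_mult flip: right_diff_distrib)
    also have "\<dots> \<le> 1 / 2 * \<bar>y - y'\<bar>"
      using that by (intro mult_right_mono) simp_all
    finally show ?thesis .
  qed
  show ?thesis
  proof (induction c)
    case True
    show ?case
      unfolding opinion_step_click by (rule affine) (use beta_nonneg beta_le_half in simp_all)
  next
    case False
    show ?case
      unfolding opinion_step_no_click by (rule affine) (use no_click_weight in simp_all)
  qed
qed

lemma opinion_step_between:
  assumes "min x0 u0 \<le> y" "y \<le> max x0 u0"
  shows "min x0 u0 \<le> opinion_step \<alpha> \<beta> x0 u0 c y \<and> opinion_step \<alpha> \<beta> x0 u0 c y \<le> max x0 u0"
proof -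
  have convex: "min x0 u0 \<le> a * v + (1 - a) * w \<and> a * v + (1 - a) * w \<le> max x0 u0"
    if "0 \<le> a" "a \<le> 1" "min x0 u0 \<le> v" "v \<le> max x0 u0" "min x0 u0 \<le> w" "w \<le> max x0 u0"
    for a v w
    using that convex_bound_le [of v "max x0 u0" w a "1 - a"]
      convex_bound_le [of "- v" "- min x0 u0" "- w" a "1 - a"] by (auto simp: algebra_simps)
  have "min x0 u0 \<le> click_limit \<and> click_limit \<le> max x0 u0"
    unfolding click_limit_def using click_weight by (intro convex) auto
  then show ?thesis
  proof (induction c)
    case True
    then show ?case
      unfolding opinion_step_click
      by (intro convex) (use assms beta_nonneg beta_le_half in auto)
  next
    case False
    have "\<beta> / (\<alpha> + \<beta>) \<le> 1"
      using no_click_weight(2) by linarith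
    then show ?case
      unfolding opinion_step_no_click
      by (intro convex) (use assms no_click_weight(1) in auto)
  qed
qed

lemma trajectory_between:
  assumes "trajectory \<alpha> \<beta> x0 u0 s T x"
  shows "min x0 u0 \<le> x k \<and> x k \<le> max x0 u0"
proof (induction k)
  case 0
  from assms show ?case
    by (simp add: trajectory_def)
next
  case (Suc k)
  then show ?case
    unfolding trajectory_Suc [OF assms] by (intro opinion_step_between) auto
qed

lemma trajectory_LIMSEQ_fixed_policy:
  assumes "0 < s" and "\<forall>i. T i = s" and "trajectory \<alpha> \<beta> x0 u0 s T x"
  shows "(\<lambda>i. x (i * s)) \<longlonglongrightarrow> click_limit"
proof -
  have "x (Suc k) = \<beta> * x k + (1 - \<beta>) * click_limit" for k
    using assms by (simp add: trajectory_Suc block_click_def opinion_step_click)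
  then have "x \<longlonglongrightarrow> click_limit"
    using beta_nonneg beta_le_half by (intro LIMSEQ_affine_recurrence [where r = \<beta> and M = 0]) auto
  then show ?thesis
    using assms(1) by (rule LIMSEQ_mult_stride)
qed

lemma trajectory_LIMSEQ_if_eventually_no_click:
  assumes "0 < s" and "\<forall>i\<ge>N. T i = 0" and "trajectory \<alpha> \<beta> x0 u0 s T x"
  shows "(\<lambda>i. x (i * s)) \<longlonglongrightarrow> x0"
proof -
  have "x (Suc k) = \<beta> / (\<alpha> + \<beta>) * x k + (1 - \<beta> / (\<alpha> + \<beta>)) * x0" if "k \<ge> N * s" for k
    using no_block_click_if_eventually_zero [OF assms(1,2) that] trajectory_Suc [OF assms(3), of k]
    by (simp add: opinion_step_no_click)
  moreover have "\<bar>\<beta> / (\<alpha> + \<beta>)\<bar> < 1"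
    using no_click_weight(2) by (subst abs_of_nonneg [OF no_click_weight(1)]) linarith
  ultimately have "x \<longlonglongrightarrow> x0"
    by (intro LIMSEQ_affine_recurrence [where r = "\<beta> / (\<alpha> + \<beta>)" and M = "N * s"])
  then show ?thesis
    using assms(1) by (rule LIMSEQ_mult_stride)
qed

lemma trajectory_convergent_if_eventually_const_policy:
  assumes "0 < s" and "\<forall>i\<ge>N. T i = c" and "trajectory \<alpha> \<beta> x0 u0 s T x"
  shows "convergent (\<lambda>i. x (i * s))"
proof (rule convergent_stride_if_eventually_periodic_contraction
    [where f = "\<lambda>k. opinion_step \<alpha> \<beta> x0 u0 (block_click s T k)" and q = "1 / 2" and M = "N * s"])
  show "\<bar>opinion_step \<alpha> \<beta> x0 u0 (block_click s T k) y
      - opinion_step \<alpha> \<beta> x0 u0 (block_click s T k) y'\<bar> \<le> 1 / 2 * \<bar>y - y'\<bar>" for k y y'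
    by (rule opinion_step_contraction)
  show "opinion_step \<alpha> \<beta> x0 u0 (block_click s T (k + s))
      = opinion_step \<alpha> \<beta> x0 u0 (block_click s T k)" if "k \<ge> N * s" for k
    using block_click_periodic [OF assms(1,2) that] by simp
  show "x (Suc k) = opinion_step \<alpha> \<beta> x0 u0 (block_click s T k) (x k)" for k
    using assms(3) by (rule trajectory_Suc)
qed (use assms(1) in simp_all)

lemma decreasing_policy_LIMSEQ:
  assumes "0 < s" and "\<kappa> > 1"
    and "\<forall>i. T (Suc i) = nat \<lfloor>real (T i) / \<kappa>\<rfloor>"
    and "trajectory \<alpha> \<beta> x0 u0 s T x"
  shows "(\<lambda>i. x (i * s)) \<longlonglongrightarrow> x0"
proof -
  have "T i \<le> T 0 - i" for i
    using nat_seq_le_diff_if_decreasing [of T i] nat_floor_divide_le_pred [OF assms(2)] assms(3)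
    by simp
  then have "\<forall>i\<ge>T 0. T i = 0"
    by (metis diff_is_0_eq le_zero_eq)
  with assms(1,4) show ?thesis
    by (intro trajectory_LIMSEQ_if_eventually_no_click)
qed

lemma adaptive_policy_limit:
  assumes "0 < s" and "0 < \<tau>" and "0 \<le> \<delta>"
    and policy: "\<forall>i. T (Suc i) = (if \<bar>x (Suc i * s) - x0\<bar> \<ge> \<delta> then T i - \<tau> else T i)"
    and traj: "trajectory \<alpha> \<beta> x0 u0 s T x"
  obtains L where "(\<lambda>i. x (i * s)) \<longlonglongrightarrow> L" "min x0 u0 \<le> L" "L \<le> max x0 u0" "\<bar>L - x0\<bar> \<le> \<delta>"
proof -
  have "T (Suc i) \<le> T i" for i
    using policy by simp
  then obtain N where const: "\<forall>i\<ge>N. T i = T N"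
    by (rule nat_seq_eventually_const_if_antimono)
  obtain L where L: "(\<lambda>i. x (i * s)) \<longlonglongrightarrow> L"
    using trajectory_convergent_if_eventually_const_policy [OF assms(1) const traj]
    by (auto simp: convergent_def)
  have "min x0 u0 \<le> L" "L \<le> max x0 u0"
    using trajectory_between [OF traj]
    by (blast intro: LIMSEQ_le_const [OF L] LIMSEQ_le_const2 [OF L])+
  moreover have "\<bar>L - x0\<bar> \<le> \<delta>"
  proof (cases "T N = 0")
    case True
    with const have "\<forall>i\<ge>N. T i = 0"
      by metis
    then have "(\<lambda>i. x (i * s)) \<longlonglongrightarrow> x0"
      using assms(1) traj by (intro trajectory_LIMSEQ_if_eventually_no_click)
    with L have "L = x0"
      by (rule LIMSEQ_unique)
    with \<open>0 \<le> \<delta>\<close> show ?thesis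
      by simp
  next
    case False
    have "\<bar>x (Suc i * s) - x0\<bar> < \<delta>" if "i \<ge> N" for i
    proof (rule ccontr)
      assume "\<not> \<bar>x (Suc i * s) - x0\<bar> < \<delta>"
      then have "T (Suc i) = T i - \<tau>"
        using policy by simp
      moreover have "T (Suc i) = T N" "T i = T N"
        using const [rule_format, of i] const [rule_format, of "Suc i"] that by simp_all
      ultimately show False
        using False \<open>0 < \<tau>\<close> by linarith
    qed
    moreover have "(\<lambda>i. \<bar>x (Suc i * s) - x0\<bar>) \<longlonglongrightarrow> \<bar>L - x0\<bar>"
      using LIMSEQ_Suc [OF L] by (intro tendsto_rabs tendsto_diff tendsto_const) simp
    ultimately show ?thesis
      by (intro LIMSEQ_le_const2) (auto intro: less_imp_le)
  qed
  ultimately show thesis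
    using L that by blast
qed

end

theorem corollary1:
  fixes \<alpha> \<beta> x0 u0 \<kappa> x_drift :: real
    and s \<tau> :: nat
    and T1 T2 T3 :: "nat \<Rightarrow> nat"
    and x1 x2 x3 :: "nat \<Rightarrow> real"
  assumes "0 \<le> \<alpha>" "\<alpha> \<le> 1" "0 \<le> \<beta>" "\<beta> \<le> 1"
    and "0 < \<alpha> + \<beta>" "\<alpha> + \<beta> \<le> 1" "\<alpha> \<ge> \<beta>"
    and "-1 \<le> x0" "x0 \<le> 1" "-1 \<le> u0" "u0 \<le> 1"
    and "s \<ge> 1"
    and "\<kappa> > 1" "\<tau> \<ge> 1" "x_drift > 0"
    \<comment> \<open>policy 1: fixed\<close>
    and "\<forall>i. T1 i = s"
    and "trajectory \<alpha> \<beta> x0 u0 s T1 x1"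
    \<comment> \<open>policy 2: decreasing\<close>
    and "T2 0 = s"
    and "\<forall>i. T2 (Suc i) = nat \<lfloor>real (T2 i) / \<kappa>\<rfloor>"
    and "trajectory \<alpha> \<beta> x0 u0 s T2 x2"
    \<comment> \<open>policy 3: adaptive decreasing (nat subtraction is max 0 (T - tau))\<close>
    and "T3 0 = s"
    and "\<forall>i. T3 (Suc i) = (if \<bar>x3 ((Suc i) * s) - x0\<bar> \<ge> x_drift then T3 i - \<tau> else T3 i)"
    and "trajectory \<alpha> \<beta> x0 u0 s T3 x3"
  shows "(\<lambda>i. x1 (i * s)) \<longlonglongrightarrow> (\<alpha> / (1 - \<beta>)) * x0 + (1 - \<alpha> / (1 - \<beta>)) * u0
       \<and> (\<lambda>i. x2 (i * s)) \<longlonglongrightarrow> x0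
       \<and> (\<exists>L. (\<lambda>i. x3 (i * s)) \<longlonglongrightarrow> L \<and>
            (if x0 < u0 then x0 \<le> L \<and> L \<le> min 1 (x0 + x_drift)
             else max (-1) (x0 - x_drift) \<le> L \<and> L \<le> x0))"
proof -
  interpret opinion_dynamics \<alpha> \<beta> x0 u0
    using assms by unfold_locales auto
  have "0 < s" "0 < \<tau>" "0 \<le> x_drift"
    using assms(12,14,15) by simp_all
  then obtain L where L: "(\<lambda>i. x3 (i * s)) \<longlonglongrightarrow> L"
    and bounds: "min x0 u0 \<le> L" "L \<le> max x0 u0" "\<bar>L - x0\<bar> \<le> x_drift"
    using adaptive_policy_limit [OF _ _ _ assms(22,23)] by blast
  have "if x0 < u0 then x0 \<le> L \<and> L \<le> min 1 (x0 + x_drift)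
      else max (-1) (x0 - x_drift) \<le> L \<and> L \<le> x0"
    using bounds assms(8-11) by (auto simp: min_def max_def abs_le_iff split: if_splits)
  moreover have "(\<lambda>i. x1 (i * s)) \<longlonglongrightarrow> click_limit"
    using \<open>0 < s\<close> assms(16,17) by (rule trajectory_LIMSEQ_fixed_policy)
  moreover have "(\<lambda>i. x2 (i * s)) \<longlonglongrightarrow> x0"
    using \<open>0 < s\<close> assms(13,19,20) by (rule decreasing_policy_LIMSEQ)
  ultimately show ?thesis
    using L unfolding click_limit_def by blast
qed

end
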